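(* The map $(f_n)^\bullet\mapsto f_\mathcal U$, where $f_\mathcal U(t):=\lim_{n,\mathcal U}f_n(t)$, is a well-defined surjective $*$-homomorphism $A^{c\mathcal U}\to C_b(X)$ with kernel exactly $I$. Consequently it induces a $*$-isomorphism $\Phi:A^{c\mathcal U}/I\to C_b(X)$ satisfying $\Phi(q(\Delta(a)))=a$ for all $a\in A$. In particular the Gelfand spectrum of $A^{c\mathcal U}/I$ is the Stone–Čech compactification $\beta X$.
   Context: $X$ is a second countable, locally compact space with basepoint $o$ and a fixed compatible proper metric $d$; $B(r)$ is the closed ball of radius $r$ about $o$. $A=C_0(X)$ and $C_b(X)$ is the $\mathrm{C}^*$-algebra of bounded continuous complex functions on $X$. $\mathcal U$ is a nonprincipal ultrafilter on $\mathbb N$, and $A^\mathcal U=\ell^\infty(A)/\{(f_n):\lim_{n,\mathcal U}\|f_n\|=0\}$ is the ultrapower, with $(f_n)^\bullet$ the class of $(f_n)$. A sequence $(f_n)\in\ell^\infty(A)$ is $\mathcal U$-equicontinuous on bounded sets if for every $r,\epsilon>0$ there is $\delta>0$ such that for a set of $n$ belonging to $\mathcal U$, $|f_n(s)-f_n(t)|\le\epsilon$ for all $s,t\in B(r)$ with $d(s,t)<\delta$; $A^{c\mathcal U}$ is the $\mathrm{C}^*$-subalgebra of $A^\mathcal U$ of classes of such sequences. $I:=\{(f_n)^\bullet\in A^\mathcal U:\exists r_n\in\mathbb R \text{ with } \lim_{n,\mathcal U}r_n=+\infty \text{ and } f_n|_{B(r_n)}\equiv 0\}$, a closed ideal contained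 in $A^{c\mathcal U}$. $q:A^{c\mathcal U}\to A^{c\mathcal U}/I$ is the quotient map and $\Delta(a)=(a,a,\dots)^\bullet$. *)

theory Defs
  imports "HOL-Analysis.Analysis"
begin

definition nonprincipal_ultrafilter :: "nat filter \<Rightarrow> bool" where
  "nonprincipal_ultrafilter U \<longleftrightarrow>
     U \<noteq> bot \<and>
     (\<forall>P. eventually P U \<or> eventually (\<lambda>n. \<not> P n) U) \<and>
     (\<forall>m. \<not> eventually (\<lambda>n. n = m) U)"

text \<open>The space X is a type with a proper metric (class heine_borel: closed bounded sets are
compact), hence locally compact and second countable. Closed ball B(r) = cball x0 r.\<close>

definition C0 :: "'a::metric_space \<Rightarrow> ('a \<Rightarrow> complex) set" where
  "C0 x0 = {f. continuous_on UNIV f \<and>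
              (\<forall>e>0. \<exists>r. \<forall>t. dist x0 t \<ge> r \<longrightarrow> cmod (f t) < e)}"

definition Cb :: "('a::metric_space \<Rightarrow> complex) set" where
  "Cb = {f. continuous_on UNIV f \<and> bounded (range f)}"

definition supnorm :: "('a \<Rightarrow> complex) \<Rightarrow> real" where
  "supnorm f = (SUP t. cmod (f t))"

definition linf_seq :: "'a::metric_space \<Rightarrow> (nat \<Rightarrow> 'a \<Rightarrow> complex) \<Rightarrow> bool" where
  "linf_seq x0 f \<longleftrightarrow> (\<forall>n. f n \<in> C0 x0) \<and> (\<exists>M. \<forall>n t. cmod (f n t) \<le> M)"

text \<open>Two representatives define the same class of A^U: lim_{n,U} ||f_n - g_n|| = 0.\<close>
definition U_equiv :: "nat filter \<Rightarrow> (nat \<Rightarrow> 'a \<Rightarrow> complex) \<Rightarrow> (nat \<Rightarrow> 'a \<Rightarrow> complex) \<Rightarrow> bool" where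
  "U_equiv U f g \<longleftrightarrow> ((\<lambda>n. supnorm (\<lambda>t. f n t - g n t)) \<longlongrightarrow> 0) U"

definition U_equicont :: "nat filter \<Rightarrow> 'a::metric_space \<Rightarrow> (nat \<Rightarrow> 'a \<Rightarrow> complex) \<Rightarrow> bool" where
  "U_equicont U x0 f \<longleftrightarrow>
     (\<forall>r>0. \<forall>\<epsilon>>0. \<exists>\<delta>>0. eventually (\<lambda>n. \<forall>s\<in>cball x0 r. \<forall>t\<in>cball x0 r.
         dist s t < \<delta> \<longrightarrow> cmod (f n s - f n t) \<le> \<epsilon>) U)"

text \<open>Representatives of classes in A^{cU}: sequences in l^\<infinity>(A) whose class contains a
U-equicontinuous representative.\<close>
definition AcU :: "nat filter \<Rightarrow> 'a::metric_space \<Rightarrow> (nat \<Rightarrow> 'a \<Rightarrow> complex) set" where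
  "AcU U x0 = {f. linf_seq x0 f \<and> (\<exists>g. linf_seq x0 g \<and> U_equicont U x0 g \<and> U_equiv U f g)}"

text \<open>Representatives of classes in the ideal I.\<close>
definition in_I :: "nat filter \<Rightarrow> 'a::metric_space \<Rightarrow> (nat \<Rightarrow> 'a \<Rightarrow> complex) \<Rightarrow> bool" where
  "in_I U x0 f \<longleftrightarrow> linf_seq x0 f \<and>
     (\<exists>g r. linf_seq x0 g \<and> U_equiv U f g \<and> filterlim r at_top U \<and>
            (\<forall>n. \<forall>t\<in>cball x0 (r n). g n t = 0))"

definition ulim :: "nat filter \<Rightarrow> (nat \<Rightarrow> 'a \<Rightarrow> complex) \<Rightarrow> 'a \<Rightarrow> complex" where
  "ulim U f = (\<lambda>t. Lim U (\<lambda>n. f n t))"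

end

theory Submission
  imports Defs
begin

(* Each f_n is bounded by a common constant, so along the ultrafilter U every sequence f_n(t) has a
   limit in a compact disc; hence f_U exists, the map is a *-homomorphism, and it ignores U-null
   perturbations. U-equicontinuity passes to the limit and makes f_U continuous.
   Surjectivity: h in C_b(X) is the image of the sequence of cut-offs of h to B(n+1), which
   agree with h on any fixed ball for large n, so this sequence is U-equicontinuous.
   Kernel: if f_U = 0, equicontinuity and compactness of balls upgrade pointwise convergence to
   uniform convergence to 0 on every ball along U; a diagonal choice of radii r_n -> oo with
   |f_n| <= 1/r_n on B(r_n) then lets one cut f_n down to 0 on B(r_n - 1) at a sup-norm cost
   of at most 1/r_n, which is exactly membership in I. *)

lemma nonprincipal_ultrafilter_not_bot: "nonprincipal_ultrafilter U \<Longrightarrow> U \<noteq> bot"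
  unfolding nonprincipal_ultrafilter_def by blast

lemma nonprincipal_ultrafilter_le_sequentially:
  assumes "nonprincipal_ultrafilter U"
  shows "U \<le> sequentially"
  unfolding le_sequentially
proof
  fix N show "eventually (\<lambda>n. N \<le> n) U"
  proof (induction N)
    case (Suc N)
    moreover have "eventually (\<lambda>n. n \<noteq> N) U"
      using assms unfolding nonprincipal_ultrafilter_def by blast
    ultimately show ?case
      by eventually_elim auto
  qed simp
qed

lemma filterlim_real_nonprincipal_ultrafilter:
  "nonprincipal_ultrafilter U \<Longrightarrow> filterlim real at_top U"
  using filterlim_mono[OF filterlim_real_sequentially order_refl nonprincipal_ultrafilter_le_sequentially] .

lemma ultrafilter_tendsto_in_compact:
  fixes x :: "'i \<Rightarrow> 'b::topological_space"
  assumes "F \<noteq> bot" and ultra: "\<And>P. eventually P F \<or> eventually (\<lambda>i. \<not> P i) F"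
    and "compact K" and "eventually (\<lambda>i. x i \<in> K) F"
  obtains l where "l \<in> K" and "(x \<longlongrightarrow> l) F"
proof -
  have "filtermap x F \<noteq> bot" "eventually (\<lambda>y. y \<in> K) (filtermap x F)"
    using assms by (simp_all add: filtermap_bot_iff eventually_filtermap)
  then obtain l where "l \<in> K" and l: "inf (nhds l) (filtermap x F) \<noteq> bot"
    using \<open>compact K\<close> unfolding compact_filter by blast
  have "eventually (\<lambda>i. x i \<in> S) F" if "open S" "l \<in> S" for S
  proof (rule ccontr)
    assume "\<not> eventually (\<lambda>i. x i \<in> S) F"
    then have "eventually (\<lambda>y. y \<notin> S) (filtermap x F)"
      using ultra[of "\<lambda>i. x i \<in> S"] by (simp add: eventually_filtermap)
    moreover have "eventually (\<lambda>y. y \<in> S) (nhds l)"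
      using that eventually_nhds by blast
    ultimately have "eventually (\<lambda>_. False) (inf (nhds l) (filtermap x F))"
      unfolding eventually_inf by blast
    with l show False by (simp add: eventually_False)
  qed
  then show ?thesis
    using that \<open>l \<in> K\<close> unfolding tendsto_def by blast
qed

lemma norm_le_supnorm:
  assumes "\<And>t. cmod (f t) \<le> M"
  shows "cmod (f t) \<le> supnorm f"
  unfolding supnorm_def using assms by (intro cSUP_upper bdd_aboveI2) auto

lemma supnorm_le: "(\<And>t. cmod (f t) \<le> M) \<Longrightarrow> supnorm f \<le> M"
  unfolding supnorm_def by (rule cSUP_least) auto

lemma supnorm_nonneg: "(\<And>t. cmod (f t) \<le> M) \<Longrightarrow> 0 \<le> supnorm f"
  using norm_le_supnorm norm_ge_zero order_trans by metis

lemma linf_seqD_bounded: "linf_seq x0 f \<Longrightarrow> \<exists>M. \<forall>n t. cmod (f n t) \<le> M"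
  unfolding linf_seq_def by blast

lemma linf_seq_diff_bounded:
  assumes "linf_seq x0 f" "linf_seq x0 g"
  obtains M where "\<And>n t. cmod (f n t - g n t) \<le> M"
proof -
  obtain Mf Mg where "\<forall>n t. cmod (f n t) \<le> Mf" "\<forall>n t. cmod (g n t) \<le> Mg"
    using assms linf_seqD_bounded by metis
  then have "cmod (f n t - g n t) \<le> Mf + Mg" for n t
    by (smt (verit) norm_triangle_ineq4)
  then show ?thesis using that by blast
qed

lemma U_equiv_refl: "U_equiv U f f"
  by (simp add: U_equiv_def supnorm_def)

lemma U_equiv_trans:
  assumes "linf_seq x0 f" "linf_seq x0 g" "linf_seq x0 h" "U_equiv U f g" "U_equiv U g h"
  shows "U_equiv U f h"
  unfolding U_equiv_def
proof (rule Lim_null_comparison)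
  obtain M1 where M1: "\<And>n t. cmod (f n t - g n t) \<le> M1"
    using linf_seq_diff_bounded[OF assms(1,2)] by blast
  obtain M2 where M2: "\<And>n t. cmod (g n t - h n t) \<le> M2"
    using linf_seq_diff_bounded[OF assms(2,3)] by blast
  have "norm (supnorm (\<lambda>t. f n t - h n t))
        \<le> supnorm (\<lambda>t. f n t - g n t) + supnorm (\<lambda>t. g n t - h n t)" for n
  proof -
    have bound: "cmod (f n t - h n t) \<le> supnorm (\<lambda>t. f n t - g n t) + supnorm (\<lambda>t. g n t - h n t)" for t
    proof -
      have "cmod (f n t - h n t) \<le> cmod (f n t - g n t) + cmod (g n t - h n t)"
        using norm_triangle_ineq[of "f n t - g n t" "g n t - h n t"] by simp
      then show ?thesis
        using norm_le_supnorm[of "\<lambda>t. f n t - g n t" M1 t, OF M1]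
          norm_le_supnorm[of "\<lambda>t. g n t - h n t" M2 t, OF M2] by linarith
    qed
    then have "supnorm (\<lambda>t. f n t - h n t) \<le> supnorm (\<lambda>t. f n t - g n t) + supnorm (\<lambda>t. g n t - h n t)"
      by (rule supnorm_le)
    moreover have "0 \<le> supnorm (\<lambda>t. f n t - h n t)"
      using bound by (rule supnorm_nonneg)
    ultimately show ?thesis by simp
  qed
  then show "eventually (\<lambda>n. norm (supnorm (\<lambda>t. f n t - h n t))
        \<le> supnorm (\<lambda>t. f n t - g n t) + supnorm (\<lambda>t. g n t - h n t)) U"
    by simp
  show "((\<lambda>n. supnorm (\<lambda>t. f n t - g n t) + supnorm (\<lambda>t. g n t - h n t)) \<longlongrightarrow> 0) U"
    using tendsto_add[OF assms(4,5)[unfolded U_equiv_def]] by simp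
qed

lemma ulim_eqI: "F \<noteq> bot \<Longrightarrow> ((\<lambda>n. f n t) \<longlongrightarrow> l) F \<Longrightarrow> ulim F f t = l"
  unfolding ulim_def by (rule tendsto_Lim)

lemma tendsto_ulim:
  assumes U: "nonprincipal_ultrafilter U" and bounded: "\<And>n t. cmod (f n t) \<le> M"
  shows "((\<lambda>n. f n t) \<longlongrightarrow> ulim U f t) U"
proof -
  obtain l where "((\<lambda>n. f n t) \<longlongrightarrow> l) U"
  proof (rule ultrafilter_tendsto_in_compact[where F=U and x="\<lambda>n. f n t" and K="cball 0 M"])
    show "U \<noteq> bot" "\<And>P. eventually P U \<or> eventually (\<lambda>n. \<not> P n) U"
      using U unfolding nonprincipal_ultrafilter_def by blast+
  qed (use bounded in auto)
  with nonprincipal_ultrafilter_not_bot[OF U] show ?thesis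
    by (simp add: ulim_eqI)
qed

lemma tendsto_ulim_linf_seq:
  "nonprincipal_ultrafilter U \<Longrightarrow> linf_seq x0 f \<Longrightarrow> ((\<lambda>n. f n t) \<longlongrightarrow> ulim U f t) U"
  using tendsto_ulim linf_seqD_bounded by metis

lemma norm_ulim_le:
  assumes U: "nonprincipal_ultrafilter U" and bounded: "\<And>n t. cmod (f n t) \<le> M"
  shows "cmod (ulim U f t) \<le> M"
  using nonprincipal_ultrafilter_not_bot[OF U] bounded
  by (intro tendsto_upperbound[OF tendsto_norm[OF tendsto_ulim[OF U bounded]]]) auto

lemma ulim_add:
  assumes "nonprincipal_ultrafilter U" "linf_seq x0 f" "linf_seq x0 g"
  shows "ulim U (\<lambda>n t. f n t + g n t) = (\<lambda>t. ulim U f t + ulim U g t)"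
  using assms nonprincipal_ultrafilter_not_bot
  by (intro ext ulim_eqI tendsto_add tendsto_ulim_linf_seq) auto

lemma ulim_mult:
  assumes "nonprincipal_ultrafilter U" "linf_seq x0 f" "linf_seq x0 g"
  shows "ulim U (\<lambda>n t. f n t * g n t) = (\<lambda>t. ulim U f t * ulim U g t)"
  using assms nonprincipal_ultrafilter_not_bot
  by (intro ext ulim_eqI tendsto_mult tendsto_ulim_linf_seq) auto

lemma ulim_cmult:
  assumes "nonprincipal_ultrafilter U" "linf_seq x0 f"
  shows "ulim U (\<lambda>n t. c * f n t) = (\<lambda>t. c * ulim U f t)"
  using assms nonprincipal_ultrafilter_not_bot
  by (intro ext ulim_eqI tendsto_mult tendsto_const tendsto_ulim_linf_seq) auto

lemma ulim_cnj:
  assumes "nonprincipal_ultrafilter U" "linf_seq x0 f"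
  shows "ulim U (\<lambda>n t. cnj (f n t)) = (\<lambda>t. cnj (ulim U f t))"
  using assms nonprincipal_ultrafilter_not_bot
  by (intro ext ulim_eqI tendsto_cnj tendsto_ulim_linf_seq) auto

lemma U_equiv_imp_tendsto_diff:
  assumes "linf_seq x0 f" "linf_seq x0 g" "U_equiv U f g"
  shows "((\<lambda>n. f n t - g n t) \<longlongrightarrow> 0) U"
proof (rule Lim_null_comparison)
  obtain M where "\<And>n t. cmod (f n t - g n t) \<le> M"
    using linf_seq_diff_bounded[OF assms(1,2)] by blast
  then show "eventually (\<lambda>n. norm (f n t - g n t) \<le> supnorm (\<lambda>t. f n t - g n t)) U"
    by (intro always_eventually allI norm_le_supnorm)
  show "((\<lambda>n. supnorm (\<lambda>t. f n t - g n t)) \<longlongrightarrow> 0) U"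
    using assms(3) unfolding U_equiv_def .
qed

lemma ulim_U_equiv:
  assumes U: "nonprincipal_ultrafilter U" and "linf_seq x0 f" "linf_seq x0 g" "U_equiv U f g"
  shows "ulim U f = ulim U g"
proof
  fix t
  have "((\<lambda>n. (f n t - g n t) + g n t) \<longlongrightarrow> 0 + ulim U g t) U"
    using assms by (intro tendsto_add U_equiv_imp_tendsto_diff tendsto_ulim_linf_seq)
  then show "ulim U f t = ulim U g t"
    using ulim_eqI nonprincipal_ultrafilter_not_bot[OF U] by simp
qed

lemma continuous_on_ulim:
  assumes U: "nonprincipal_ultrafilter U" and "linf_seq x0 f" and equicont: "U_equicont U x0 f"
  shows "continuous_on UNIV (ulim U f)"
  unfolding continuous_on_iff
proof (intro ballI allI impI)
  fix t :: 'a and \<epsilon> :: real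
  assume "\<epsilon> > 0"
  have "dist x0 t + 1 > 0" "\<epsilon>/2 > 0"
    using \<open>\<epsilon> > 0\<close> by (simp_all add: add_nonneg_pos)
  then obtain \<delta> where "\<delta> > 0" and close: "eventually (\<lambda>n. \<forall>s\<in>cball x0 (dist x0 t + 1).
      \<forall>s'\<in>cball x0 (dist x0 t + 1). dist s s' < \<delta> \<longrightarrow> cmod (f n s - f n s') \<le> \<epsilon>/2) U"
    using equicont unfolding U_equicont_def by blast
  have "dist (ulim U f s) (ulim U f t) < \<epsilon>" if "dist s t < min \<delta> 1" for s
  proof -
    have "s \<in> cball x0 (dist x0 t + 1)" "t \<in> cball x0 (dist x0 t + 1)"
      using that dist_triangle[of x0 s t] by (auto simp: dist_commute)
    with close that have "eventually (\<lambda>n. cmod (f n s - f n t) \<le> \<epsilon>/2) U"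
      by (auto elim: eventually_mono)
    moreover have "((\<lambda>n. cmod (f n s - f n t)) \<longlongrightarrow> cmod (ulim U f s - ulim U f t)) U"
      using assms by (intro tendsto_norm tendsto_diff tendsto_ulim_linf_seq)
    ultimately have "cmod (ulim U f s - ulim U f t) \<le> \<epsilon>/2"
      using tendsto_upperbound nonprincipal_ultrafilter_not_bot[OF U] by blast
    with \<open>\<epsilon> > 0\<close> show ?thesis by (simp add: dist_norm)
  qed
  with \<open>\<delta> > 0\<close> show "\<exists>d>0. \<forall>s\<in>UNIV. dist s t < d \<longrightarrow> dist (ulim U f s) (ulim U f t) < \<epsilon>"
    by (intro exI[of _ "min \<delta> 1"]) auto
qed

lemma AcU_linf_seq: "f \<in> AcU U x0 \<Longrightarrow> linf_seq x0 f"
  unfolding AcU_def by blast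

lemma ulim_in_Cb:
  assumes U: "nonprincipal_ultrafilter U" and "f \<in> AcU U x0"
  shows "ulim U f \<in> Cb"
proof -
  obtain g where f: "linf_seq x0 f" and g: "linf_seq x0 g" "U_equicont U x0 g" and "U_equiv U f g"
    using assms(2) unfolding AcU_def by blast
  obtain M where M: "\<And>n t. cmod (f n t) \<le> M"
    using linf_seqD_bounded[OF f] by blast
  have "\<forall>t. cmod (ulim U f t) \<le> M"
    using norm_ulim_le[where f=f, OF U M] by blast
  then have "bounded (range (ulim U f))"
    unfolding bounded_iff by blast
  moreover have "continuous_on UNIV (ulim U f)"
    using ulim_U_equiv[OF U f g(1) \<open>U_equiv U f g\<close>] continuous_on_ulim[OF U g] by simp
  ultimately show ?thesis
    unfolding Cb_def by blast
qed

definition cutoff :: "'a::metric_space \<Rightarrow> real \<Rightarrow> 'a \<Rightarrow> real" where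
  "cutoff x0 R t = max 0 (min 1 (R - dist x0 t))"

lemma cutoff_nonneg: "0 \<le> cutoff x0 R t"
  and cutoff_le_one: "cutoff x0 R t \<le> 1"
  and cutoff_eq_one: "dist x0 t \<le> R - 1 \<Longrightarrow> cutoff x0 R t = 1"
  and cutoff_eq_zero: "R \<le> dist x0 t \<Longrightarrow> cutoff x0 R t = 0"
  by (auto simp: cutoff_def)

lemma continuous_on_cutoff: "continuous_on S (cutoff x0 R)"
  unfolding cutoff_def by (intro continuous_intros)

lemma norm_cutoff_mult_le: "cmod (of_real (cutoff x0 R t) * z) \<le> cmod z"
  by (simp add: norm_mult cutoff_nonneg cutoff_le_one mult_left_le_one_le)

lemma norm_one_minus_cutoff_mult_le: "cmod ((1 - of_real (cutoff x0 R t)) * z) \<le> cmod z"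
proof -
  have "cmod ((1 - of_real (cutoff x0 R t)) * z) = (1 - cutoff x0 R t) * cmod z"
    by (metis cutoff_le_one abs_of_nonneg diff_ge_0_iff_ge norm_mult norm_of_real of_real_1 of_real_diff)
  also have "\<dots> \<le> cmod z"
    by (rule mult_left_le_one_le) (simp_all add: cutoff_nonneg cutoff_le_one)
  finally show ?thesis .
qed

lemma cutoff_mult_in_C0:
  assumes "continuous_on UNIV h"
  shows "(\<lambda>t. of_real (cutoff x0 R t) * h t) \<in> C0 x0"
proof -
  have "continuous_on UNIV (\<lambda>t. of_real (cutoff x0 R t) * h t)"
    using assms continuous_on_cutoff by (intro continuous_intros)
  then show ?thesis
    unfolding C0_def by (auto intro!: exI[of _ R] simp: cutoff_eq_zero)
qed

lemma one_minus_cutoff_mult_in_C0: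
  assumes "h \<in> C0 x0"
  shows "(\<lambda>t. (1 - of_real (cutoff x0 R t)) * h t) \<in> C0 x0"
proof -
  have "continuous_on UNIV (\<lambda>t. (1 - of_real (cutoff x0 R t)) * h t)"
    using assms continuous_on_cutoff unfolding C0_def by (intro continuous_intros) auto
  moreover have "\<exists>r. \<forall>t. r \<le> dist x0 t \<longrightarrow> cmod ((1 - of_real (cutoff x0 R t)) * h t) < e"
    if "e > 0" for e
  proof -
    obtain r where "\<forall>t. r \<le> dist x0 t \<longrightarrow> cmod (h t) < e"
      using assms \<open>e > 0\<close> unfolding C0_def by blast
    then show ?thesis
      using norm_one_minus_cutoff_mult_le[of x0 R] le_less_trans by blast
  qed
  ultimately show ?thesis
    unfolding C0_def by blast
qed

lemma C0_bounded:
  fixes x0 :: "'a::heine_borel"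
  assumes "a \<in> C0 x0"
  obtains M where "\<And>t. cmod (a t) \<le> M"
proof -
  obtain r where far: "\<And>t. r \<le> dist x0 t \<Longrightarrow> cmod (a t) < 1"
    using assms zero_less_one unfolding C0_def by blast
  have "continuous_on (cball x0 r) a"
    using assms unfolding C0_def by (blast intro: continuous_on_subset)
  then have "bounded (a ` cball x0 r)"
    by (intro compact_imp_bounded compact_continuous_image compact_cball)
  then obtain B where near: "\<And>t. t \<in> cball x0 r \<Longrightarrow> cmod (a t) \<le> B"
    unfolding bounded_iff by blast
  have "cmod (a t) \<le> max 1 B" for t
    using far[of t] near[of t] by (cases "r \<le> dist x0 t") auto
  then show ?thesis using that by blast
qed

lemma U_equicont_if_eventually_agrees_on_cballs:
  fixes x0 :: "'a::heine_borel"
  assumes "continuous_on UNIV h" and agree: "\<And>r. eventually (\<lambda>n. \<forall>t\<in>cball x0 r. f n t = h t) U"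
  shows "U_equicont U x0 f"
  unfolding U_equicont_def
proof (intro allI impI)
  fix r \<epsilon> :: real
  assume "r > 0" "\<epsilon> > 0"
  have "uniformly_continuous_on (cball x0 r) h"
    using assms(1) by (intro compact_uniformly_continuous compact_cball) (rule continuous_on_subset, auto)
  then obtain \<delta> where "\<delta> > 0" and \<delta>: "\<forall>t\<in>cball x0 r. \<forall>s\<in>cball x0 r.
      dist s t < \<delta> \<longrightarrow> dist (h s) (h t) < \<epsilon>"
    using \<open>\<epsilon> > 0\<close> unfolding uniformly_continuous_on_def by blast
  have "eventually (\<lambda>n. \<forall>s\<in>cball x0 r. \<forall>t\<in>cball x0 r. dist s t < \<delta> \<longrightarrow> cmod (f n s - f n t) \<le> \<epsilon>) U"
    using agree[of r] by eventually_elim (use \<delta> in \<open>fastforce simp: dist_norm\<close>)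
  with \<open>\<delta> > 0\<close> show "\<exists>\<delta>>0. eventually (\<lambda>n. \<forall>s\<in>cball x0 r. \<forall>t\<in>cball x0 r.
      dist s t < \<delta> \<longrightarrow> cmod (f n s - f n t) \<le> \<epsilon>) U"
    by blast
qed

lemma AcU_I: "linf_seq x0 f \<Longrightarrow> U_equicont U x0 f \<Longrightarrow> f \<in> AcU U x0"
  unfolding AcU_def using U_equiv_refl by blast

lemma const_in_AcU:
  fixes x0 :: "'a::heine_borel"
  assumes "a \<in> C0 x0"
  shows "(\<lambda>n. a) \<in> AcU U x0"
proof (rule AcU_I)
  obtain M where "\<And>t. cmod (a t) \<le> M"
    using C0_bounded[OF assms] by blast
  with assms show "linf_seq x0 (\<lambda>n. a)"
    unfolding linf_seq_def by blast
  show "U_equicont U x0 (\<lambda>n. a)"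
    using assms unfolding C0_def by (intro U_equicont_if_eventually_agrees_on_cballs) auto
qed

lemma ulim_const: "F \<noteq> bot \<Longrightarrow> ulim F (\<lambda>n. a) = a"
  by (intro ext ulim_eqI) auto

lemma Cb_subset_ulim_AcU:
  fixes x0 :: "'a::heine_borel"
  assumes U: "nonprincipal_ultrafilter U"
  shows "Cb \<subseteq> ulim U ` AcU U x0"
proof
  fix h :: "'a \<Rightarrow> complex"
  assume "h \<in> Cb"
  define f where "f n t = of_real (cutoff x0 (real n + 1) t) * h t" for n t
  have h: "continuous_on UNIV h" and "bounded (range h)"
    using \<open>h \<in> Cb\<close> unfolding Cb_def by blast+
  then obtain M where "\<And>t. cmod (h t) \<le> M"
    unfolding bounded_iff by blast
  then have "linf_seq x0 f"
    unfolding linf_seq_def f_def using cutoff_mult_in_C0[OF h] norm_cutoff_mult_le order_trans by blast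
  have agree: "eventually (\<lambda>n. \<forall>t\<in>cball x0 r. f n t = h t) U" for r
  proof -
    have "eventually (\<lambda>n. r \<le> real n) U"
      using filterlim_real_nonprincipal_ultrafilter[OF U] unfolding filterlim_at_top by blast
    then show ?thesis
      by eventually_elim (auto simp: f_def cutoff_eq_one)
  qed
  have "f \<in> AcU U x0"
    using \<open>linf_seq x0 f\<close> U_equicont_if_eventually_agrees_on_cballs[OF h agree] by (rule AcU_I)
  moreover have "ulim U f = h"
  proof
    fix t
    show "ulim U f t = h t"
      using agree[of "dist x0 t"] nonprincipal_ultrafilter_not_bot[OF U]
      by (intro ulim_eqI tendsto_eventually) (auto elim: eventually_mono)
  qed
  ultimately show "h \<in> ulim U ` AcU U x0"
    by blast
qed

lemma ulim_eq_0_if_in_I: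
  assumes U: "nonprincipal_ultrafilter U" and "in_I U x0 f"
  shows "ulim U f = (\<lambda>t. 0)"
proof -
  obtain g r where f: "linf_seq x0 f" and g: "linf_seq x0 g" and "U_equiv U f g"
    and r: "filterlim r at_top U" and vanish: "\<And>n t. t \<in> cball x0 (r n) \<Longrightarrow> g n t = 0"
    using assms(2) unfolding in_I_def by blast
  have "ulim U g t = 0" for t
  proof (rule ulim_eqI[OF nonprincipal_ultrafilter_not_bot[OF U]], rule tendsto_eventually)
    have "eventually (\<lambda>n. dist x0 t \<le> r n) U"
      using r unfolding filterlim_at_top by blast
    then show "eventually (\<lambda>n. g n t = 0) U"
      by eventually_elim (simp add: vanish)
  qed
  then show ?thesis
    using ulim_U_equiv[OF U f g \<open>U_equiv U f g\<close>] by auto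
qed

lemma eventually_uniformly_small_on_cball:
  fixes x0 :: "'a::heine_borel"
  assumes equicont: "U_equicont U x0 h" and null: "\<And>t. ((\<lambda>n. h n t) \<longlongrightarrow> 0) U"
    and "R > 0" "\<epsilon> > 0"
  shows "eventually (\<lambda>n. \<forall>t\<in>cball x0 R. cmod (h n t) \<le> \<epsilon>) U"
proof -
  obtain \<delta> where "\<delta> > 0" and close: "eventually (\<lambda>n. \<forall>s\<in>cball x0 R. \<forall>t\<in>cball x0 R.
      dist s t < \<delta> \<longrightarrow> cmod (h n s - h n t) \<le> \<epsilon>/2) U"
    using equicont \<open>R > 0\<close> \<open>\<epsilon> > 0\<close> unfolding U_equicont_def by (meson half_gt_zero)
  obtain T where T: "T \<subseteq> cball x0 R" "finite T" "cball x0 R \<subseteq> (\<Union>c\<in>T. ball c \<delta>)"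
    using compactE_image[OF compact_cball, of "cball x0 R" "\<lambda>c. ball c \<delta>"] \<open>\<delta> > 0\<close> by force
  have "eventually (\<lambda>n. cmod (h n c) \<le> \<epsilon>/2) U" for c
    using tendstoD[OF null[of c], of "\<epsilon>/2"] \<open>\<epsilon> > 0\<close> by (auto elim: eventually_mono)
  then have "eventually (\<lambda>n. \<forall>c\<in>T. cmod (h n c) \<le> \<epsilon>/2) U"
    by (intro eventually_ball_finite \<open>finite T\<close>) auto
  with close show ?thesis
  proof eventually_elim
    case (elim n)
    show ?case
    proof
      fix t assume t: "t \<in> cball x0 R"
      then obtain c where "c \<in> T" "dist t c < \<delta>"
        using T(3) by (force simp: dist_commute)
      then have "cmod (h n t - h n c) \<le> \<epsilon>/2" "cmod (h n c) \<le> \<epsilon>/2"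
        using elim t T(1) by auto
      then show "cmod (h n t) \<le> \<epsilon>"
        using norm_triangle_sub[of "h n t" "h n c"] by linarith
    qed
  qed
qed

lemma diagonal_at_top:
  fixes F :: "nat filter"
  assumes "F \<le> sequentially" and P: "\<And>k. eventually (\<lambda>n. P n k) F"
  obtains r :: "nat \<Rightarrow> nat" where "filterlim r at_top F" and "\<And>n k. k < r n \<Longrightarrow> P n k"
proof
  define S where "S n = {k. k \<le> n \<and> (\<forall>j<k. P n j)}" for n
  have S: "finite (S n)" "0 \<in> S n" for n
    unfolding S_def by auto
  show "k < Max (S n) \<Longrightarrow> P n k" for n k
    using Max_in[OF S(1), of n] S(2) unfolding S_def by blast
  have "eventually (\<lambda>n. K \<le> Max (S n)) F" for K
  proof -
    have "eventually (\<lambda>n. K \<le> n) F"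
      using assms(1) unfolding le_sequentially by blast
    moreover have "eventually (\<lambda>n. \<forall>j\<in>{..<K}. P n j) F"
      using P by (intro eventually_ball_finite) auto
    ultimately show ?thesis
      by eventually_elim (auto simp: S_def intro!: Max_ge[OF S(1)])
  qed
  then show "filterlim (\<lambda>n. Max (S n)) at_top F"
    unfolding filterlim_at_top by blast
qed

lemma in_I_if_small_on_growing_balls:
  assumes f: "linf_seq x0 f" and h: "linf_seq x0 h" and "U_equiv U f h"
    and R: "filterlim R at_top U" and small: "\<And>n t. dist x0 t < R n \<Longrightarrow> cmod (h n t) \<le> \<epsilon> n"
    and "\<And>n. 0 \<le> \<epsilon> n" and "(\<epsilon> \<longlongrightarrow> 0) U"
  shows "in_I U x0 f"
proof -
  define g where "g n t = (1 - of_real (cutoff x0 (R n) t)) * h n t" for n t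
  have g_le: "cmod (g n t) \<le> cmod (h n t)" for n t
    unfolding g_def by (rule norm_one_minus_cutoff_mult_le)
  obtain M where "\<forall>n t. cmod (h n t) \<le> M"
    using linf_seqD_bounded[OF h] by blast
  then have "\<forall>n t. cmod (g n t) \<le> M"
    using g_le order_trans by blast
  moreover have "g n \<in> C0 x0" for n
    using h unfolding linf_seq_def g_def by (blast intro: one_minus_cutoff_mult_in_C0)
  ultimately have g: "linf_seq x0 g"
    unfolding linf_seq_def by blast
  have diff_le: "cmod (h n t - g n t) \<le> \<epsilon> n" for n t
  proof (cases "R n \<le> dist x0 t")
    case True
    then show ?thesis by (simp add: g_def cutoff_eq_zero \<open>0 \<le> \<epsilon> n\<close>)
  next
    case False
    then have "cmod (h n t - g n t) = cmod (of_real (cutoff x0 (R n) t) * h n t)"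
      by (simp add: g_def algebra_simps)
    also have "\<dots> \<le> \<epsilon> n"
      using norm_cutoff_mult_le small False by (meson not_le order_trans)
    finally show ?thesis .
  qed
  have "U_equiv U h g"
    unfolding U_equiv_def
  proof (rule Lim_null_comparison)
    have "norm (supnorm (\<lambda>t. h n t - g n t)) \<le> \<epsilon> n" for n
    proof -
      have "0 \<le> supnorm (\<lambda>t. h n t - g n t)" "supnorm (\<lambda>t. h n t - g n t) \<le> \<epsilon> n"
        using diff_le by (rule supnorm_nonneg, rule supnorm_le)
      then show ?thesis by simp
    qed
    then show "eventually (\<lambda>n. norm (supnorm (\<lambda>t. h n t - g n t)) \<le> \<epsilon> n) U"
      by simp
    show "(\<epsilon> \<longlongrightarrow> 0) U" by fact
  qed
  with f h g \<open>U_equiv U f h\<close> have "U_equiv U f g"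
    by (rule U_equiv_trans)
  moreover have "filterlim (\<lambda>n. R n - 1) at_top U"
    unfolding filterlim_at_top
  proof
    fix Z
    show "eventually (\<lambda>n. Z \<le> R n - 1) U"
      using R unfolding filterlim_at_top by (rule allE[of _ "Z + 1"]) (auto elim: eventually_mono)
  qed
  moreover have "\<forall>n. \<forall>t\<in>cball x0 (R n - 1). g n t = 0"
    by (simp add: g_def cutoff_eq_one)
  ultimately show ?thesis
    unfolding in_I_def using f g by blast
qed

lemma in_I_if_ulim_eq_0:
  fixes x0 :: "'a::heine_borel"
  assumes U: "nonprincipal_ultrafilter U" and "f \<in> AcU U x0" and "ulim U f = (\<lambda>t. 0)"
  shows "in_I U x0 f"
proof -
  obtain h where f: "linf_seq x0 f" and h: "linf_seq x0 h" "U_equicont U x0 h"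
    and "U_equiv U f h"
    using assms(2) unfolding AcU_def by blast
  have "((\<lambda>n. h n t) \<longlongrightarrow> 0) U" for t
    using tendsto_ulim_linf_seq[OF U h(1), of t] ulim_U_equiv[OF U f h(1) \<open>U_equiv U f h\<close>] assms(3)
    by metis
  then have "eventually (\<lambda>n. \<forall>t\<in>cball x0 (real k + 1). cmod (h n t) \<le> inverse (real k + 1)) U" for k
    using h(2) by (intro eventually_uniformly_small_on_cball) auto
  then obtain r where r: "filterlim r at_top U"
    and small: "\<And>n k. k < r n \<Longrightarrow> \<forall>t\<in>cball x0 (real k + 1). cmod (h n t) \<le> inverse (real k + 1)"
    using diagonal_at_top[OF nonprincipal_ultrafilter_le_sequentially[OF U],
        where P="\<lambda>n k. \<forall>t\<in>cball x0 (real k + 1). cmod (h n t) \<le> inverse (real k + 1)"]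
    by blast
  have "cmod (h n t) \<le> inverse (real (r n))" if "dist x0 t < real (r n)" for n t
    using small[of "r n - 1" n] that by (cases "r n") (auto simp: add.commute dest!: bspec[of _ _ t])
  moreover have "filterlim (\<lambda>n. real (r n)) at_top U"
    using filterlim_compose[OF filterlim_real_sequentially r] .
  ultimately show ?thesis
    using f h(1) \<open>U_equiv U f h\<close>
    by (intro in_I_if_small_on_growing_balls[where \<epsilon>="\<lambda>n. inverse (real (r n))"] tendsto_inverse_0_at_top)
      auto
qed

theorem mainTheorem5:
  fixes U :: "nat filter" and x0 :: "'a::heine_borel"
  assumes "nonprincipal_ultrafilter U"
  shows
    \<comment> \<open>f_U is the pointwise U-limit\<close>
    "(\<forall>f\<in>AcU U x0. \<forall>t. ((\<lambda>n. f n t) \<longlongrightarrow> ulim U f t) U)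
     \<comment> \<open>well-defined on classes\<close>
     \<and> (\<forall>f\<in>AcU U x0. \<forall>g\<in>AcU U x0. U_equiv U f g \<longrightarrow> ulim U f = ulim U g)
     \<comment> \<open>lands in C_b(X)\<close>
     \<and> (\<forall>f\<in>AcU U x0. ulim U f \<in> Cb)
     \<comment> \<open>*-homomorphism\<close>
     \<and> (\<forall>f\<in>AcU U x0. \<forall>g\<in>AcU U x0.
          ulim U (\<lambda>n t. f n t + g n t) = (\<lambda>t. ulim U f t + ulim U g t)
        \<and> ulim U (\<lambda>n t. f n t * g n t) = (\<lambda>t. ulim U f t * ulim U g t))
     \<and> (\<forall>f\<in>AcU U x0. \<forall>c. ulim U (\<lambda>n t. c * f n t) = (\<lambda>t. c * ulim U f t))
     \<and> (\<forall>f\<in>AcU U x0. ulim U (\<lambda>n t. cnj (f n t)) = (\<lambda>t. cnj (ulim U f t)))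
     \<comment> \<open>surjective onto C_b(X)\<close>
     \<and> (\<forall>h\<in>Cb. \<exists>f\<in>AcU U x0. ulim U f = h)
     \<comment> \<open>kernel is exactly I\<close>
     \<and> (\<forall>f\<in>AcU U x0. ulim U f = (\<lambda>t. 0) \<longleftrightarrow> in_I U x0 f)
     \<comment> \<open>Phi(q(Delta a)) = a\<close>
     \<and> (\<forall>a\<in>C0 x0. (\<lambda>n. a) \<in> AcU U x0 \<and> ulim U (\<lambda>n. a) = a)"
proof -
  note U = assms
  note linf = AcU_linf_seq
  show ?thesis
  proof (intro conjI ballI allI)
    show "((\<lambda>n. f n t) \<longlongrightarrow> ulim U f t) U" if "f \<in> AcU U x0" for f t
      using tendsto_ulim_linf_seq[OF U linf[OF that]] .
    show "U_equiv U f g \<longrightarrow> ulim U f = ulim U g" if "f \<in> AcU U x0" "g \<in> AcU U x0" for f g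
      using ulim_U_equiv[OF U linf linf] that by blast
    show "ulim U f \<in> Cb" if "f \<in> AcU U x0" for f
      using ulim_in_Cb[OF U that] .
    show "ulim U (\<lambda>n t. f n t + g n t) = (\<lambda>t. ulim U f t + ulim U g t)"
      and "ulim U (\<lambda>n t. f n t * g n t) = (\<lambda>t. ulim U f t * ulim U g t)"
      if "f \<in> AcU U x0" "g \<in> AcU U x0" for f g
      using ulim_add[OF U] ulim_mult[OF U] linf that by blast+
    show "ulim U (\<lambda>n t. c * f n t) = (\<lambda>t. c * ulim U f t)" if "f \<in> AcU U x0" for f c
      using ulim_cmult[OF U linf[OF that]] .
    show "ulim U (\<lambda>n t. cnj (f n t)) = (\<lambda>t. cnj (ulim U f t))" if "f \<in> AcU U x0" for f
      using ulim_cnj[OF U linf[OF that]] .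
    show "\<exists>f\<in>AcU U x0. ulim U f = h" if "h \<in> Cb" for h
      using Cb_subset_ulim_AcU[OF U] that by blast
    show "ulim U f = (\<lambda>t. 0) \<longleftrightarrow> in_I U x0 f" if "f \<in> AcU U x0" for f
      using in_I_if_ulim_eq_0[OF U that] ulim_eq_0_if_in_I[OF U] by blast
    show "(\<lambda>n. a) \<in> AcU U x0" and "ulim U (\<lambda>n. a) = a" if "a \<in> C0 x0" for a
      using const_in_AcU[OF that] ulim_const[OF nonprincipal_ultrafilter_not_bot[OF U]] by blast+
  qed
qed

end
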